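(* For every $f\in\mathfrak N_0$, $(h\hat S-\hat Sh)f=-if$, and for every $f\in\mathfrak N_1$, $(h\hat S^*-\hat S^*h)f=-if$.
   Context: Work in $L^2(\mathbb{R})$; $q$ is multiplication by $x$, $p=-i\,d/dx$, $h=\frac12(p^2+q^2)$ on $D(p^2)\cap D(q^2)$. Let $\mathbb{H}=\{z:\operatorname{Im}z>0\}$, $\xi_z(x)=e^{izx^2/2}$, $\mathscr{C}(z)=\frac{z-i}{z+i}$, $\log w=\log|w|+i\arg w$ with $-\pi\le\arg w<\pi$. For $z\in\mathbb H\setminus\{i\}$ set $L_0(z)=\log(-\mathscr C(z))$ and $L_k(z)=\frac{d^{k-1}}{dz^{k-1}}\frac{2i}{1+z^2}$ for $k\ge1$. For $n\ge0$ let $[t_z^nL](x,z)=\sum_{k=0}^n\binom nkx^{2(n-k)}(-2i)^kL_k(z)$ (i.e. $(x^2-2i\,\frac{d}{dz})^n$ applied to $\log(-\mathscr C(z))$), and for a polynomial $\rho(s)=\sum c_ns^n$ let $[\rho(t_z)L]=\sum c_n[t^n_zL]$. $\mathfrak N_0$ is the span of $\{\rho(x^2)\xi_z:\rho$ polynomial, $z\in\mathbb H\setminus\{i\}\}$ and $\mathfrak N_1$ the span of $\{\rho(x^2)x\xi_z\}$ (same ranges). The linear operators $\hat S$ on $\mathfrak N_0$ and $\hat S^*$ on $\mathfrak N_1$ (notation only) are defined by $\hat S(\rho(x^2)\xi_z)=\frac i2[\rho(t_z)L](x,z)\xi_z$ and $\hat S^*(\rho(x^2)x\xi_z)=\frac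 i2[\rho(t_z)L](x,z)x\xi_z$, extended linearly. *)

theory Defs
  imports "HOL-Analysis.Analysis" "HOL-Computational_Algebra.Polynomial"
begin

text \<open>Functions on the real line are represented as maps real \<Rightarrow> complex
  (smooth representatives of the L2 classes).\<close>

definition hop :: "(real \<Rightarrow> complex) \<Rightarrow> real \<Rightarrow> complex" where
  "hop f x = (1/2) * (- vector_derivative (\<lambda>y. vector_derivative f (at y)) (at x)
                     + complex_of_real (x^2) * f x)"

definition xi :: "complex \<Rightarrow> real \<Rightarrow> complex" where
  "xi z x = exp (\<i> * z * complex_of_real (x^2) / 2)"

definition cayley :: "complex \<Rightarrow> complex" where
  "cayley z = (z - \<i>) / (z + \<i>)"

text \<open>Logarithm with argument in [-pi, pi) (Isabelle's Ln uses (-pi, pi]).\<close>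
definition logm :: "complex \<Rightarrow> complex" where
  "logm w = complex_of_real (ln (cmod w))
            + \<i> * complex_of_real (if Arg w = pi then - pi else Arg w)"

definition Lk :: "nat \<Rightarrow> complex \<Rightarrow> complex" where
  "Lk k z = (if k = 0 then logm (- cayley z)
             else (deriv ^^ (k - 1)) (\<lambda>w. 2 * \<i> / (1 + w^2)) z)"

definition tnL :: "nat \<Rightarrow> real \<Rightarrow> complex \<Rightarrow> complex" where
  "tnL n x z = (\<Sum>k\<le>n. of_nat (n choose k) * complex_of_real (x ^ (2 * (n - k)))
                         * (- 2 * \<i>) ^ k * Lk k z)"

definition rhoL :: "complex poly \<Rightarrow> real \<Rightarrow> complex \<Rightarrow> complex" where
  "rhoL \<rho> x z = (\<Sum>n\<le>degree \<rho>. coeff \<rho> n * tnL n x z)"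

definition adm :: "complex \<Rightarrow> bool" where
  "adm z \<longleftrightarrow> Im z > 0 \<and> z \<noteq> \<i>"

text \<open>Finite linear combinations of generators, as lists of (coefficient, rho, z).\<close>
definition valid_rep :: "(complex \<times> complex poly \<times> complex) list \<Rightarrow> bool" where
  "valid_rep r \<longleftrightarrow> (\<forall>(c, \<rho>, z) \<in> set r. adm z)"

definition eval0 :: "(complex \<times> complex poly \<times> complex) list \<Rightarrow> real \<Rightarrow> complex" where
  "eval0 r x = (\<Sum>(c, \<rho>, z) \<leftarrow> r. c * poly \<rho> (complex_of_real (x^2)) * xi z x)"

definition eval1 :: "(complex \<times> complex poly \<times> complex) list \<Rightarrow> real \<Rightarrow> complex" where
  "eval1 r x = (\<Sum>(c, \<rho>, z) \<leftarrow> r.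
                  c * poly \<rho> (complex_of_real (x^2)) * complex_of_real x * xi z x)"

definition Seval0 :: "(complex \<times> complex poly \<times> complex) list \<Rightarrow> real \<Rightarrow> complex" where
  "Seval0 r x = (\<Sum>(c, \<rho>, z) \<leftarrow> r. c * (\<i> / 2) * rhoL \<rho> x z * xi z x)"

definition Seval1 :: "(complex \<times> complex poly \<times> complex) list \<Rightarrow> real \<Rightarrow> complex" where
  "Seval1 r x = (\<Sum>(c, \<rho>, z) \<leftarrow> r.
                   c * (\<i> / 2) * rhoL \<rho> x z * complex_of_real x * xi z x)"

definition N0 :: "(real \<Rightarrow> complex) set" where
  "N0 = {f. \<exists>r. valid_rep r \<and> f = eval0 r}"

definition N1 :: "(real \<Rightarrow> complex) set" where
  "N1 = {f. \<exists>r. valid_rep r \<and> f = eval1 r}"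

text \<open>Linear extensions of S-hat and S-hat-star (the value on f, determined by any representation).\<close>
definition Shat :: "(real \<Rightarrow> complex) \<Rightarrow> real \<Rightarrow> complex" where
  "Shat f = (THE g. \<exists>r. valid_rep r \<and> f = eval0 r \<and> g = Seval0 r)"

definition Shat_star :: "(real \<Rightarrow> complex) \<Rightarrow> real \<Rightarrow> complex" where
  "Shat_star f = (THE g. \<exists>r. valid_rep r \<and> f = eval1 r \<and> g = Seval1 r)"

end

theory Submission
  imports Defs "HOL-Complex_Analysis.Complex_Analysis"
begin

text \<open>
  On a generator \<rho>(x^2) \<xi>_z the oscillator h acts as a second order differential operator on
  the polynomial \<rho> in s = x^2, and on \<rho>(x^2) x \<xi>_z in the same way with shifted coefficients.
  Expanding t_z^n L binomially, h transforms [t_z^n L] \<xi>_z by the same three-term rule in n as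
  s^n \<xi>_z, up to the single extra term -2 s^n. This needs nothing about L but the recurrence
  obtained by differentiating (1 + z^2) \<cdot> 2i/(1 + z^2) = 2i; the factor i/2 in Shat turns -2
  into -i. Shat is well defined because the functions s^k exp(i z s/2) with distinct z are linearly
  independent, so a finite sum of generators determines its polynomial coefficients.\<close>

section \<open>The sequence L_k\<close>

lemma higher_deriv_one_plus_square:
  "(deriv ^^ m) (\<lambda>w::complex. 1 + w^2) z =
     (if m = 0 then 1 + z^2 else if m = 1 then 2 * z else if m = 2 then 2 else 0)"
proof -
  have d: "deriv (\<lambda>w::complex. 1 + w^2) = (\<lambda>w. 2 * w)" "deriv (\<lambda>w::complex. 2 * w) = (\<lambda>w. 2)"
    by (auto intro!: ext DERIV_imp_deriv derivative_eq_intros)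
  consider "m = 0" | "m = Suc 0" | "m = Suc (Suc 0)" | k where "m = Suc (Suc (Suc k))"
    by (metis not0_implies_Suc)
  then show ?thesis
    by cases (simp_all add: d funpow_Suc_right higher_deriv_const del: funpow.simps)
qed

lemma higher_deriv_one_plus_square_mult:
  fixes f :: "complex \<Rightarrow> complex"
  assumes "f holomorphic_on S" "open S" "z \<in> S"
  shows "(deriv ^^ m) (\<lambda>w. (1 + w^2) * f w) z =
    (1 + z^2) * (deriv ^^ m) f z + 2 * of_nat m * z * (deriv ^^ (m - 1)) f z
      + of_nat m * (of_nat m - 1) * (deriv ^^ (m - 2)) f z"
proof -
  let ?term = "\<lambda>i. of_nat (m choose i) * (deriv ^^ i) (\<lambda>w. 1 + w^2) z * (deriv ^^ (m - i)) f z"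
  have "(deriv ^^ m) (\<lambda>w. (1 + w^2) * f w) z = (\<Sum>i = 0..m. ?term i)"
    by (rule higher_deriv_mult[OF _ assms]) (auto intro!: holomorphic_intros)
  also have "\<dots> = (\<Sum>i \<in> {0..m} \<inter> {0, 1, 2}. ?term i)"
    by (rule sum.mono_neutral_right) (auto simp: higher_deriv_one_plus_square)
  also have "\<dots> = (1 + z^2) * (deriv ^^ m) f z + 2 * of_nat m * z * (deriv ^^ (m - 1)) f z
      + of_nat m * (of_nat m - 1) * (deriv ^^ (m - 2)) f z"
  proof -
    consider "m = 0" | "m = 1" | "m \<ge> 2" by linarith
    then show ?thesis
    proof cases
      case 3
      have "2 * (m choose 2) = m * (m - 1)"
        using 3 Suc_times_binomial_eq[of "m - 1" 1] by (simp add: numeral_2_eq_2)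
      then have "(of_nat (2 * (m choose 2)) :: complex) = of_nat (m * (m - 1))"
        by (rule arg_cong)
      then have choose_2: "(of_nat (m choose 2) :: complex) = of_nat m * (of_nat m - 1) / 2"
        using 3 by (simp add: of_nat_diff field_simps)
      have three_terms: "{0..m} \<inter> {0, 1, 2} = {0, 1, 2}" using 3 by auto
      show ?thesis
        unfolding three_terms by (simp add: higher_deriv_one_plus_square choose_2 field_simps)
    qed (auto simp: higher_deriv_one_plus_square)
  qed
  finally show ?thesis .
qed

lemma one_plus_square_eq_0_iff: "1 + w^2 = 0 \<longleftrightarrow> w = \<i> \<or> w = - (\<i> :: complex)"
proof -
  have "1 + w^2 = (w - \<i>) * (w + \<i>)" by (simp add: algebra_simps power2_eq_square)
  then show ?thesis by (auto simp: add_eq_0_iff2)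
qed

text \<open>For k \<ge> 1, Lk k z is the (k-1)-st derivative of 2i/(1 + z^2), the derivative of
  log(-C(z)); the recurrence is Leibniz' rule for (1 + z^2) \<cdot> 2i/(1 + z^2) = 2i. L 0 only meets
  the coefficient j(j - 1) = 0, so the branch of the logarithm never matters.\<close>

definition cayley_log_recurrence :: "complex \<Rightarrow> (nat \<Rightarrow> complex) \<Rightarrow> bool" where
  "cayley_log_recurrence z L \<longleftrightarrow>
     (1 + z^2) * L 1 = 2 * \<i> \<and>
     (\<forall>j\<ge>1. (1 + z^2) * L (j + 1) + 2 * of_nat j * z * L j + of_nat j * (of_nat j - 1) * L (j - 1) = 0)"

lemma Lk_recurrence:
  assumes "adm z"
  shows "cayley_log_recurrence z (\<lambda>k. Lk k z)"
proof -
  define f where "f w = 2 * \<i> / (1 + w^2)" for w :: complex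
  define S where "S = - {\<i>, - \<i>}"
  have S: "open S" "z \<in> S" "f holomorphic_on S"
    using assms unfolding S_def f_def[abs_def] adm_def
    by (auto simp: one_plus_square_eq_0_iff intro!: holomorphic_intros)
  have "\<forall>\<^sub>F w in nhds z. (1 + w^2) * f w = 2 * \<i>"
    using eventually_nhds_in_open[OF S(1,2)]
    by eventually_elim (auto simp: S_def f_def one_plus_square_eq_0_iff)
  then have "(deriv ^^ m) (\<lambda>w. (1 + w^2) * f w) z = (deriv ^^ m) (\<lambda>w. 2 * \<i>) z" for m
    by (rule higher_deriv_cong_ev) simp
  then have rec: "(1 + z^2) * (deriv ^^ m) f z + 2 * of_nat m * z * (deriv ^^ (m - 1)) f z
      + of_nat m * (of_nat m - 1) * (deriv ^^ (m - 2)) f z = (if m = 0 then 2 * \<i> else 0)" for m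
    by (simp add: higher_deriv_one_plus_square_mult[OF S(3,1,2)] higher_deriv_const)
  have L: "Lk k z = (deriv ^^ (k - 1)) f z" if "k \<ge> 1" for k
    using that by (simp add: Lk_def f_def[abs_def])
  show ?thesis
    unfolding cayley_log_recurrence_def
  proof (intro conjI allI impI)
    show "(1 + z^2) * Lk 1 z = 2 * \<i>" using rec[of 0] by (simp add: L)
  next
    fix j :: nat assume "j \<ge> 1"
    then consider "j = 1" | "j \<ge> 2" by linarith
    then show "(1 + z^2) * Lk (j + 1) z + 2 * of_nat j * z * Lk j z + of_nat j * (of_nat j - 1) * Lk (j - 1) z = 0"
    proof cases
      case 1 then show ?thesis using rec[of 1] by (simp add: L)
    next
      case 2 then show ?thesis using rec[of j] by (simp add: L numeral_2_eq_2)
    qed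
  qed
qed

section \<open>The polynomial model of t_z and h\<close>

text \<open>With L k standing for L_k(z), tpoly L n is [t_z^n L] as a polynomial in s = x^2, and
  tmap L \<rho> is [\<rho>(t_z) L].\<close>

definition tpoly :: "(nat \<Rightarrow> complex) \<Rightarrow> nat \<Rightarrow> complex poly" where
  "tpoly L n = (\<Sum>k\<le>n. monom (of_nat (n choose k) * (- 2 * \<i>) ^ k * L k) (n - k))"

definition tmap :: "(nat \<Rightarrow> complex) \<Rightarrow> complex poly \<Rightarrow> complex poly" where
  "tmap L \<rho> = (\<Sum>n\<le>degree \<rho>. smult (coeff \<rho> n) (tpoly L n))"

lemma coeff_tpoly:
  "coeff (tpoly L n) e =
     (if e \<le> n then of_nat (n choose (n - e)) * (- 2 * \<i>) ^ (n - e) * L (n - e) else 0)"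
proof -
  have "coeff (tpoly L n) e = (\<Sum>k\<le>n. if k = n - e \<and> e \<le> n then of_nat (n choose k) * (- 2 * \<i>) ^ k * L k else 0)"
    unfolding tpoly_def coeff_sum coeff_monom by (rule sum.cong) auto
  then show ?thesis by (simp add: sum.delta)
qed

lemma tmap_eq_sum: "degree \<rho> \<le> N \<Longrightarrow> tmap L \<rho> = (\<Sum>n\<le>N. smult (coeff \<rho> n) (tpoly L n))"
  unfolding tmap_def by (rule sum.mono_neutral_left) (auto simp: coeff_eq_0)

lemma tmap_add: "tmap L (p + q) = tmap L p + tmap L q"
proof -
  define N where "N = max (degree p) (degree q)"
  have "degree (p + q) \<le> N" "degree p \<le> N" "degree q \<le> N"
    unfolding N_def by (auto intro: degree_add_le)
  then show ?thesis by (simp add: tmap_eq_sum smult_add_left sum.distrib)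
qed

lemma smult_sum_right: "smult c (\<Sum>i\<in>S. f i) = (\<Sum>i\<in>S. smult c (f i))"
  by (induct S rule: infinite_finite_induct) (auto simp: smult_add_right)

lemma tmap_smult: "tmap L (smult c p) = smult c (tmap L p)"
  using tmap_eq_sum[of "smult c p" "degree p" L] by (simp add: tmap_def smult_sum_right degree_smult_le)

lemma tmap_0: "tmap L 0 = 0"
  by (simp add: tmap_def)

lemma tmap_sum: "tmap L (\<Sum>i\<in>S. f i) = (\<Sum>i\<in>S. tmap L (f i))"
  by (induct S rule: infinite_finite_induct) (simp_all add: tmap_add tmap_0)

lemma tmap_monom: "tmap L (monom c n) = smult c (tpoly L n)"
proof -
  have "tmap L (monom c n) = (\<Sum>m\<le>n. smult (coeff (monom c n) m) (tpoly L m))"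
    by (rule tmap_eq_sum) (simp add: degree_monom_le)
  also have "\<dots> = smult c (tpoly L n)"
    by (simp add: coeff_monom sum.delta if_distrib[of "\<lambda>c. smult c _"] cong: if_cong)
  finally show ?thesis .
qed

lemma rhoL_eq_poly_tmap: "rhoL \<rho> x z = poly (tmap (\<lambda>k. Lk k z) \<rho>) (of_real (x^2))"
proof -
  have "tnL n x z = poly (tpoly (\<lambda>k. Lk k z) n) (of_real (x^2))" for n
    unfolding tnL_def tpoly_def poly_sum poly_monom
    by (rule sum.cong) (simp_all add: power_mult[symmetric] mult_ac)
  then show ?thesis by (simp add: rhoL_def tmap_def poly_sum)
qed

text \<open>h (p(x^2) \<xi>_z) = (osc 1 z p)(x^2) \<xi>_z and h (p(x^2) x \<xi>_z) = (osc 3 z p)(x^2) x \<xi>_z.\<close>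

definition osc :: "complex \<Rightarrow> complex \<Rightarrow> complex poly \<Rightarrow> complex poly" where
  "osc \<alpha> z p = smult (1/2) (- smult 4 (pCons 0 (pderiv (pderiv p))) - smult (2 * \<alpha>) (pderiv p)
      - smult (4 * \<i> * z) (pCons 0 (pderiv p)) - smult (\<alpha> * \<i> * z) p + smult (1 + z^2) (pCons 0 p))"

lemma coeff_osc:
  "coeff (osc \<alpha> z p) e = (1/2) * (- 2 * of_nat (e + 1) * (2 * of_nat e + \<alpha>) * coeff p (e + 1)
      - \<i> * z * (4 * of_nat e + \<alpha>) * coeff p e + (1 + z^2) * (if e = 0 then 0 else coeff p (e - 1)))"
  by (cases e) (simp_all add: osc_def coeff_pderiv algebra_simps)

lemma osc_add: "osc \<alpha> z (p + q) = osc \<alpha> z p + osc \<alpha> z q"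
  by (rule poly_eqI) (simp add: coeff_osc algebra_simps add_divide_distrib)

lemma osc_smult: "osc \<alpha> z (smult c p) = smult c (osc \<alpha> z p)"
  by (rule poly_eqI) (simp add: coeff_osc algebra_simps)

lemma osc_0: "osc \<alpha> z 0 = 0"
  by (simp add: osc_def)

lemma osc_sum: "osc \<alpha> z (\<Sum>i\<in>S. f i) = (\<Sum>i\<in>S. osc \<alpha> z (f i))"
  by (induct S rule: infinite_finite_induct) (simp_all add: osc_add osc_0)

definition osc_on_basis :: "complex \<Rightarrow> complex \<Rightarrow> (nat \<Rightarrow> complex poly) \<Rightarrow> nat \<Rightarrow> complex poly" where
  "osc_on_basis \<alpha> z b n = smult (1/2) (smult (- 2 * of_nat n * (2 * of_nat n - 2 + \<alpha>)) (b (n - 1))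
     + smult (- \<i> * z * (4 * of_nat n + \<alpha>)) (b n) + smult (1 + z^2) (b (n + 1)))"

lemma osc_monom: "osc \<alpha> z (monom 1 n) = osc_on_basis \<alpha> z (monom 1) n"
proof (rule poly_eqI)
  fix e
  consider "n = e + 1" | "n = e" | "e = n + 1" | "n \<noteq> e + 1 \<and> n \<noteq> e \<and> e \<noteq> n + 1" by blast
  then show "coeff (osc \<alpha> z (monom 1 n)) e = coeff (osc_on_basis \<alpha> z (monom 1) n) e"
    by cases (auto simp: coeff_osc osc_on_basis_def coeff_monom algebra_simps)
qed

lemma tmap_osc_monom: "tmap L (osc \<alpha> z (monom 1 n)) = osc_on_basis \<alpha> z (tpoly L) n"
  by (simp only: osc_monom osc_on_basis_def tmap_add tmap_smult tmap_monom smult_1_left)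

lemma coeff_osc_tpoly_below:
  assumes "cayley_log_recurrence z L"
  shows "coeff (osc \<alpha> z (tpoly L (e + k + 1))) e = coeff (osc_on_basis \<alpha> z (tpoly L) (e + k + 1)) e"
proof -
  define n where "n = e + k + 1"
  define D where "D = - 2 * \<i>"
  define P where "P = D ^ k"
  have rec: "(1 + z^2) * L (k + 2) + 2 * (of_nat k + 1) * z * L (k + 1) + (of_nat k + 1) * of_nat k * L k = 0"
    using assms unfolding cayley_log_recurrence_def by (auto dest!: spec[of _ "k + 1"] simp: algebra_simps)
  have c1: "coeff (tpoly L n) (e + 1) = of_nat (n choose k) * P * L k"
    by (simp add: coeff_tpoly n_def P_def D_def)
  have c2: "coeff (tpoly L n) e = of_nat (n choose (k + 1)) * (P * D) * L (k + 1)"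
    by (simp add: coeff_tpoly n_def P_def D_def)
  have c3: "(if e = 0 then 0 else coeff (tpoly L n) (e - 1)) = of_nat (n choose (k + 2)) * (P * D * D) * L (k + 2)"
    by (cases e) (simp_all add: coeff_tpoly n_def P_def D_def numeral_2_eq_2 del: binomial_Suc_Suc)
  have c4: "coeff (tpoly L (n - 1)) e = of_nat ((n - 1) choose k) * P * L k"
    by (simp add: coeff_tpoly n_def P_def D_def)
  have c5: "coeff (tpoly L (n + 1)) e = of_nat ((n + 1) choose (k + 2)) * (P * D * D) * L (k + 2)"
    by (simp add: coeff_tpoly n_def P_def D_def numeral_2_eq_2)
  have "(e + 1) * (n choose k) = (k + 1) * (n choose (k + 1))"
    using binomial_absorb_comp[of n k] binomial_absorption[of k n] by (simp add: n_def)
  then have b1: "(of_nat e + 1) * of_nat (n choose k) = (of_nat k + 1) * (of_nat (n choose (k + 1)) :: complex)"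
    by (metis of_nat_Suc of_nat_mult Suc_eq_plus1 add.commute)
  have "n * ((n - 1) choose k) = (k + 1) * (n choose (k + 1))"
    using binomial_absorption[of k n] by simp
  then have b2: "of_nat n * of_nat ((n - 1) choose k) = (of_nat k + 1) * (of_nat (n choose (k + 1)) :: complex)"
    by (metis of_nat_Suc of_nat_mult Suc_eq_plus1 add.commute)
  have b3: "(of_nat ((n + 1) choose (k + 2)) :: complex) = of_nat (n choose (k + 1)) + of_nat (n choose (k + 2))"
    by (simp add: numeral_2_eq_2)
  have n: "of_nat n = (of_nat e + of_nat k + 1 :: complex)" by (simp add: n_def)
  have "coeff (osc \<alpha> z (tpoly L n)) e - coeff (osc_on_basis \<alpha> z (tpoly L) n) e
      = 2 * of_nat (n choose (k + 1)) * P *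
          ((1 + z^2) * L (k + 2) + 2 * (of_nat k + 1) * z * L (k + 1) + (of_nat k + 1) * of_nat k * L k)"
    unfolding coeff_osc osc_on_basis_def coeff_add coeff_smult c1 c2 c3 c4 c5 b3 of_nat_add of_nat_1
    using b1 b2 n D_def i_squared by algebra
  then show ?thesis using rec by (simp add: n_def)
qed

lemma osc_tpoly:
  assumes "cayley_log_recurrence z L"
  shows "osc \<alpha> z (tpoly L n) = osc_on_basis \<alpha> z (tpoly L) n + monom (-2) n"
proof (rule poly_eqI)
  fix e
  have L1: "(1 + z^2) * L 1 = 2 * \<i>" using assms by (simp add: cayley_log_recurrence_def)
  consider k where "n = e + k + 1" | "e = n" | "e > n"
    by (metis add.commute add_Suc_right less_imp_Suc_add linorder_neqE_nat Suc_eq_plus1)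
  then show "coeff (osc \<alpha> z (tpoly L n)) e = coeff (osc_on_basis \<alpha> z (tpoly L) n + monom (-2) n) e"
  proof cases
    case 1
    then show ?thesis using coeff_osc_tpoly_below[OF assms, of \<alpha> e k] by (simp add: coeff_monom)
  next
    case 2
    have "(1 + z^2) * (of_nat n * (- 2 * \<i>) * L 1) - (1 + z^2) * ((of_nat n + 1) * (- 2 * \<i>) * L 1) = - 4"
      using L1 i_squared by algebra
    with 2 show ?thesis
      by (cases n) (auto simp: coeff_osc osc_on_basis_def coeff_tpoly coeff_monom algebra_simps)
  next
    case 3
    then show ?thesis by (auto simp: coeff_osc osc_on_basis_def coeff_tpoly coeff_monom)
  qed
qed

lemma osc_tmap_commutator:
  assumes "cayley_log_recurrence z L"
  shows "osc \<alpha> z (tmap L \<rho>) - tmap L (osc \<alpha> z \<rho>) = smult (-2) \<rho>"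
proof -
  define N where "N = degree \<rho>"
  have \<rho>: "\<rho> = (\<Sum>n\<le>N. smult (coeff \<rho> n) (monom 1 n))"
    by (simp add: N_def smult_monom poly_as_sum_of_monoms)
  have "osc \<alpha> z (tmap L \<rho>) = (\<Sum>n\<le>N. smult (coeff \<rho> n) (osc_on_basis \<alpha> z (tpoly L) n + monom (-2) n))"
    by (simp add: tmap_def N_def osc_sum osc_smult osc_tpoly[OF assms])
  moreover have "tmap L (osc \<alpha> z \<rho>) = (\<Sum>n\<le>N. smult (coeff \<rho> n) (osc_on_basis \<alpha> z (tpoly L) n))"
    by (subst \<rho>) (simp add: osc_sum osc_smult tmap_sum tmap_smult tmap_osc_monom)
  moreover have "(\<Sum>n\<le>N. smult (coeff \<rho> n) (monom (-2) n)) = smult (-2) \<rho>"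
    by (subst (2) \<rho>) (simp add: smult_sum_right smult_monom mult.commute)
  ultimately show ?thesis
    by (simp add: smult_add_right sum.distrib)
qed

section \<open>The oscillator on the generators\<close>

definition gauss :: "complex \<Rightarrow> complex \<Rightarrow> complex" where
  "gauss z w = exp (\<i> * z * w^2 / 2)"

definition deriv_even :: "complex \<Rightarrow> complex poly \<Rightarrow> complex poly" where
  "deriv_even z q = smult 2 (pderiv q) + smult (\<i> * z) q"

definition deriv_odd :: "complex \<Rightarrow> complex poly \<Rightarrow> complex poly" where
  "deriv_odd z q = q + smult 2 (pCons 0 (pderiv q)) + smult (\<i> * z) (pCons 0 q)"

lemma has_field_derivative_even:
  "((\<lambda>w. poly q (w^2) * gauss z w) has_field_derivative poly (deriv_even z q) (w^2) * w * gauss z w) (at w)"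
  unfolding gauss_def deriv_even_def
  by (auto intro!: derivative_eq_intros DERIV_chain2[OF poly_DERIV] simp: power2_eq_square algebra_simps)

lemma has_field_derivative_odd:
  "((\<lambda>w. poly q (w^2) * w * gauss z w) has_field_derivative poly (deriv_odd z q) (w^2) * gauss z w) (at w)"
  unfolding gauss_def deriv_odd_def
  by (auto intro!: derivative_eq_intros DERIV_chain2[OF poly_DERIV] simp: power2_eq_square algebra_simps)

lemma osc_1_eq: "osc 1 z p = smult (1/2) (pCons 0 p - deriv_odd z (deriv_even z p))"
  by (rule poly_eqI, rename_tac e, case_tac e)
     (simp_all add: osc_def deriv_even_def deriv_odd_def coeff_pderiv pderiv_add pderiv_smult algebra_simps power2_eq_square)

lemma osc_3_eq: "osc 3 z p = smult (1/2) (pCons 0 p - deriv_even z (deriv_odd z p))"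
  by (rule poly_eqI, rename_tac e, case_tac e)
     (simp_all add: osc_def deriv_even_def deriv_odd_def coeff_pderiv pderiv_add pderiv_smult pderiv_pCons algebra_simps power2_eq_square)

type_synonym rep = "(complex \<times> complex poly \<times> complex) list"

definition rep_map :: "(complex \<Rightarrow> complex poly \<Rightarrow> complex poly) \<Rightarrow> rep \<Rightarrow> rep" where
  "rep_map F r = map (\<lambda>(c, \<rho>, z). (c, F z \<rho>, z)) r"

lemma rep_map_simps [simp]:
  "rep_map F [] = []"
  "rep_map F ((c, \<rho>, z) # r) = (c, F z \<rho>, z) # rep_map F r"
  by (simp_all add: rep_map_def)

lemma valid_rep_rep_map [simp]: "valid_rep (rep_map F r) \<longleftrightarrow> valid_rep r"
  by (induct r) (auto simp: valid_rep_def)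

lemma eval0_simps [simp]:
  "eval0 [] x = 0"
  "eval0 ((c, \<rho>, z) # r) x = c * poly \<rho> (of_real (x^2)) * xi z x + eval0 r x"
  by (simp_all add: eval0_def)

lemma eval1_eq_eval0: "eval1 r x = of_real x * eval0 r x"
  by (induct r) (auto simp: eval0_def eval1_def algebra_simps)

definition eval0_ext :: "rep \<Rightarrow> complex \<Rightarrow> complex" where
  "eval0_ext r w = (\<Sum>(c, \<rho>, z) \<leftarrow> r. c * poly \<rho> (w^2) * gauss z w)"

definition eval1_ext :: "rep \<Rightarrow> complex \<Rightarrow> complex" where
  "eval1_ext r w = (\<Sum>(c, \<rho>, z) \<leftarrow> r. c * poly \<rho> (w^2) * w * gauss z w)"

lemma eval0_ext_simps [simp]:
  "eval0_ext [] w = 0"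
  "eval0_ext ((c, \<rho>, z) # r) w = c * poly \<rho> (w^2) * gauss z w + eval0_ext r w"
  by (simp_all add: eval0_ext_def)

lemma eval1_ext_simps [simp]:
  "eval1_ext [] w = 0"
  "eval1_ext ((c, \<rho>, z) # r) w = c * poly \<rho> (w^2) * w * gauss z w + eval1_ext r w"
  by (simp_all add: eval1_ext_def)

lemma eval0_eq_eval0_ext: "eval0 r x = eval0_ext r (of_real x)"
  by (induct r) (auto simp: xi_def gauss_def)

lemma eval1_eq_eval1_ext: "eval1 r x = eval1_ext r (of_real x)"
  by (induct r) (auto simp: eval1_def xi_def gauss_def)

lemma has_field_derivative_eval0_ext:
  "(eval0_ext r has_field_derivative eval1_ext (rep_map deriv_even r) w) (at w)"
proof (induct r)
  case (Cons a r)
  obtain c \<rho> z where "a = (c, \<rho>, z)" by (cases a)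
  with Cons show ?case
    using DERIV_add[OF DERIV_cmult[OF has_field_derivative_even] Cons] by (simp add: mult.assoc)
qed simp

lemma has_field_derivative_eval1_ext:
  "(eval1_ext r has_field_derivative eval0_ext (rep_map deriv_odd r) w) (at w)"
proof (induct r)
  case (Cons a r)
  obtain c \<rho> z where "a = (c, \<rho>, z)" by (cases a)
  with Cons show ?case
    using DERIV_add[OF DERIV_cmult[OF has_field_derivative_odd] Cons] by (simp add: mult.assoc)
qed simp

lemma hop_of_real_restriction:
  assumes "\<And>w. (G has_field_derivative G' w) (at w)" "\<And>w. (G' has_field_derivative G'' w) (at w)"
  shows "hop (\<lambda>x. G (of_real x)) x = (1/2) * (- G'' (of_real x) + of_real (x^2) * G (of_real x))"
proof -
  have "vector_derivative (\<lambda>x. G (of_real x)) (at y) = G' (of_real y)" for y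
    by (rule vector_derivative_at[OF has_vector_derivative_real_field[OF assms(1)]])
  moreover have "vector_derivative (\<lambda>y. G' (of_real y)) (at x) = G'' (of_real x)"
    by (rule vector_derivative_at[OF has_vector_derivative_real_field[OF assms(2)]])
  ultimately show ?thesis by (simp add: hop_def)
qed

lemma hop_eval0: "hop (eval0 r) = eval0 (rep_map (osc 1) r)"
proof
  fix x
  have "hop (eval0 r) x = (1/2) * (- eval0_ext (rep_map deriv_odd (rep_map deriv_even r)) (of_real x)
      + of_real (x^2) * eval0_ext r (of_real x))"
    unfolding eval0_eq_eval0_ext[abs_def]
    by (rule hop_of_real_restriction[OF has_field_derivative_eval0_ext has_field_derivative_eval1_ext])
  also have "\<dots> = eval0_ext (rep_map (osc 1) r) (of_real x)"
    by (induct r) (auto simp: osc_1_eq algebra_simps add_divide_distrib)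
  finally show "hop (eval0 r) x = eval0 (rep_map (osc 1) r) x" by (simp add: eval0_eq_eval0_ext)
qed

lemma hop_eval1: "hop (eval1 r) = eval1 (rep_map (osc 3) r)"
proof
  fix x
  have "hop (eval1 r) x = (1/2) * (- eval1_ext (rep_map deriv_even (rep_map deriv_odd r)) (of_real x)
      + of_real (x^2) * eval1_ext r (of_real x))"
    unfolding eval1_eq_eval1_ext[abs_def]
    by (rule hop_of_real_restriction[OF has_field_derivative_eval1_ext has_field_derivative_eval0_ext])
  also have "\<dots> = eval1_ext (rep_map (osc 3) r) (of_real x)"
    by (induct r) (auto simp: osc_3_eq algebra_simps add_divide_distrib)
  finally show "hop (eval1 r) x = eval1 (rep_map (osc 3) r) x" by (simp add: eval1_eq_eval1_ext)
qed

section \<open>Linear independence of the generators\<close>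

lemma exp_poly_sum_deriv_eq_0:
  fixes Q :: "complex \<Rightarrow> complex poly"
  assumes F0: "\<And>w. (\<Sum>a\<in>A. poly (Q a) w * exp (a * w)) = 0"
  shows "(\<Sum>a\<in>A. poly (pderiv (Q a) + smult (a - b) (Q a)) w * exp (a * w)) = 0"
proof -
  have "((\<lambda>w. \<Sum>a\<in>A. poly (Q a) w * exp (a * w)) has_field_derivative
      (\<Sum>a\<in>A. poly (pderiv (Q a)) w * exp (a * w) + poly (Q a) w * (a * exp (a * w)))) (at w)"
    by (rule DERIV_sum) (auto intro!: derivative_eq_intros poly_DERIV simp: algebra_simps)
  moreover have "((\<lambda>w. \<Sum>a\<in>A. poly (Q a) w * exp (a * w)) has_field_derivative 0) (at w)"
    unfolding F0 by simp
  ultimately have "(\<Sum>a\<in>A. poly (pderiv (Q a)) w * exp (a * w) + poly (Q a) w * (a * exp (a * w))) = 0"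
    using DERIV_unique by blast
  moreover have "(\<Sum>a\<in>A. poly (pderiv (Q a) + smult (a - b) (Q a)) w * exp (a * w)) =
      (\<Sum>a\<in>A. poly (pderiv (Q a)) w * exp (a * w) + poly (Q a) w * (a * exp (a * w)))
        - b * (\<Sum>a\<in>A. poly (Q a) w * exp (a * w))"
    unfolding sum_distrib_left sum_subtractf[symmetric] by (rule sum.cong) (auto simp: algebra_simps)
  ultimately show ?thesis using F0 by simp
qed

lemma pderiv_add_smult_neq_0:
  fixes p :: "'a::{idom, ring_char_0} poly"
  assumes "c \<noteq> 0" "p \<noteq> 0"
  shows "pderiv p + smult c p \<noteq> 0"
proof
  assume "pderiv p + smult c p = 0"
  moreover have "coeff (pderiv p + smult c p) (degree p) = c * lead_coeff p"
    by (simp add: coeff_pderiv coeff_eq_0)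
  ultimately show False using assms by simp
qed

lemma exp_poly_sum_eq_0_imp_zero:
  fixes Q :: "complex \<Rightarrow> complex poly"
  assumes "finite A" "\<And>w. (\<Sum>a\<in>A. poly (Q a) w * exp (a * w)) = 0"
  shows "\<forall>a\<in>A. Q a = 0"
  using assms(2)
proof (induct "\<Sum>a\<in>A. length (coeffs (Q a))" arbitrary: Q rule: less_induct)
  case less
  show ?case
  proof (rule ccontr)
    assume "\<not> (\<forall>a\<in>A. Q a = 0)"
    then obtain a0 where a0: "a0 \<in> A" "Q a0 \<noteq> 0" by auto
    \<comment> \<open>the polynomial factor of d/dw (exp(-a0 w) \<cdot> poly (Q a) w \<cdot> exp(a w))\<close>
    define Q' where "Q' a = pderiv (Q a) + smult (a - a0) (Q a)" for a
    have le: "length (coeffs (Q' a)) \<le> length (coeffs (Q a))" for a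
    proof (cases "Q' a = 0")
      case False
      have "degree (Q' a) \<le> degree (Q a)"
        unfolding Q'_def by (intro degree_add_le) (auto simp: degree_pderiv degree_smult_le)
      with False show ?thesis by (cases "Q a = 0") (auto simp: Q'_def length_coeffs_degree)
    qed simp
    have "length (coeffs (Q' a0)) < length (coeffs (Q a0))"
      using a0(2) by (cases "pderiv (Q a0) = 0")
        (auto simp: Q'_def length_coeffs_degree degree_pderiv pderiv_eq_0_iff)
    then have "(\<Sum>a\<in>A. length (coeffs (Q' a))) < (\<Sum>a\<in>A. length (coeffs (Q a)))"
      using assms(1) a0(1) le by (intro sum_strict_mono_ex1) auto
    moreover have "(\<Sum>a\<in>A. poly (Q' a) w * exp (a * w)) = 0" for w
      unfolding Q'_def by (rule exp_poly_sum_deriv_eq_0[OF less.prems])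
    ultimately have "\<forall>a\<in>A. Q' a = 0" using less.hyps by blast
    then have others: "Q a = 0" if "a \<in> A" "a \<noteq> a0" for a
      using that pderiv_add_smult_neq_0[of "a - a0" "Q a"] by (auto simp: Q'_def)
    have "poly (Q a0) w * exp (a0 * w) = 0" for w
      using less.prems[of w] others by (simp add: sum.remove[OF assms(1) a0(1)])
    then have "Q a0 = 0" using poly_all_0_iff_0 by auto
    with a0 show False by simp
  qed
qed

lemma positive_reals_islimpt: "1 islimpt (complex_of_real ` {0<..})"
  unfolding islimpt_approachable
proof (intro allI impI)
  fix e :: real assume "e > 0"
  then show "\<exists>x'\<in>complex_of_real ` {0<..}. x' \<noteq> 1 \<and> dist x' 1 < e"
    by (intro bexI[of _ "of_real (1 + e/2)"]) (auto simp: dist_norm complex_eq_iff)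
qed

lemma gauss_poly_sum_eq_0_imp_zero:
  fixes Q :: "complex \<Rightarrow> complex poly"
  assumes fin: "finite Z"
    and vanish: "\<And>x::real. x > 0 \<Longrightarrow> (\<Sum>z\<in>Z. poly (Q z) (of_real (x^2)) * xi z x) = 0"
  shows "\<forall>z\<in>Z. Q z = 0"
proof -
  define a where "a z = \<i> * z / 2" for z :: complex
  have inj: "inj_on a Z" unfolding a_def by (rule inj_onI) simp
  define F where "F w = (\<Sum>z\<in>Z. poly (Q z) w * exp (a z * w))" for w
  have "F w = 0" if w: "w \<in> complex_of_real ` {0<..}" for w
  proof -
    obtain t where t: "t > 0" "w = of_real t" using w by blast
    then have "F w = (\<Sum>z\<in>Z. poly (Q z) (of_real (sqrt t ^ 2)) * xi z (sqrt t))"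
      unfolding F_def by (intro sum.cong) (auto simp: xi_def a_def algebra_simps)
    then show ?thesis using vanish[of "sqrt t"] t(1) by simp
  qed
  moreover have "F holomorphic_on UNIV"
    unfolding F_def[abs_def] by (auto intro!: holomorphic_intros)
  ultimately have "F w = 0" for w
    using analytic_continuation[OF _ open_UNIV connected_UNIV subset_UNIV UNIV_I positive_reals_islimpt]
    by blast
  moreover have "(\<Sum>b\<in>a ` Z. poly (Q (-2 * \<i> * b)) w * exp (b * w)) = F w" for w
    unfolding sum.reindex[OF inj] F_def by (intro sum.cong) (auto simp: a_def)
  ultimately have "\<forall>b\<in>a ` Z. Q (-2 * \<i> * b) = 0"
    by (intro exp_poly_sum_eq_0_imp_zero[OF finite_imageI[OF fin]]) simp
  then show ?thesis by (auto simp: a_def)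
qed

section \<open>Well-definedness of Shat and the commutator\<close>

definition rep_params :: "rep \<Rightarrow> complex set" where
  "rep_params r = (\<lambda>(c, \<rho>, z). z) ` set r"

definition rep_coeff :: "rep \<Rightarrow> complex \<Rightarrow> complex poly" where
  "rep_coeff r z = (\<Sum>(c, \<rho>, z') \<leftarrow> r. if z' = z then smult c \<rho> else 0)"

lemma rep_params_simps [simp]:
  "rep_params [] = {}"
  "rep_params ((c, \<rho>, z) # r) = insert z (rep_params r)"
  by (simp_all add: rep_params_def)

lemma rep_coeff_simps [simp]:
  "rep_coeff [] z = 0"
  "rep_coeff ((c, \<rho>, z') # r) z = (if z' = z then smult c \<rho> else 0) + rep_coeff r z"
  by (simp_all add: rep_coeff_def)

lemma finite_rep_params: "finite (rep_params r)"
  by (simp add: rep_params_def)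

lemma rep_params_rep_map [simp]: "rep_params (rep_map F r) = rep_params r"
  by (induct r) auto

lemma eval0_eq_sum_rep_coeff:
  assumes "finite Z" "rep_params r \<subseteq> Z"
  shows "eval0 r x = (\<Sum>z\<in>Z. poly (rep_coeff r z) (of_real (x^2)) * xi z x)"
  using assms(2)
proof (induct r)
  case (Cons a r)
  obtain c \<rho> z0 where a: "a = (c, \<rho>, z0)" by (cases a)
  with Cons.prems have "z0 \<in> Z" "rep_params r \<subseteq> Z" by auto
  have split: "poly (rep_coeff (a # r) z) (of_real (x^2)) * xi z x
      = (if z0 = z then c * poly \<rho> (of_real (x^2)) * xi z x else 0)
        + poly (rep_coeff r z) (of_real (x^2)) * xi z x" for z
    by (simp add: a distrib_right)
  show ?case
    unfolding split sum.distrib using Cons.hyps \<open>z0 \<in> Z\<close> \<open>rep_params r \<subseteq> Z\<close> assms(1)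
    by (simp add: a sum.delta)
qed simp

lemma rep_coeff_rep_map:
  assumes "\<And>z p q. K z (p + q) = K z p + K z q" "\<And>z c p. K z (smult c p) = smult c (K z p)"
  shows "rep_coeff (rep_map K r) z = K z (rep_coeff r z)"
proof (induct r)
  case Nil
  show ?case using assms(2)[of z 0 0] by simp
next
  case (Cons a r)
  obtain c \<rho> z' where "a = (c, \<rho>, z')" by (cases a)
  with Cons show ?case using assms(2)[of z 0 0] by (simp add: assms)
qed

text \<open>Agreement for x > 0 is all that eval1 r = eval1 r' gives about eval0.\<close>

lemma eval0_rep_map_cong:
  assumes "\<And>z p q. K z (p + q) = K z p + K z q" "\<And>z c p. K z (smult c p) = smult c (K z p)"
    and "\<And>x. x > 0 \<Longrightarrow> eval0 r x = eval0 r' x"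
  shows "eval0 (rep_map K r) = eval0 (rep_map K r')"
proof -
  define Z where "Z = rep_params r \<union> rep_params r'"
  have Z: "finite Z" "rep_params r \<subseteq> Z" "rep_params r' \<subseteq> Z"
    by (auto simp: Z_def finite_rep_params)
  have "\<forall>z\<in>Z. rep_coeff r z - rep_coeff r' z = 0"
  proof (rule gauss_poly_sum_eq_0_imp_zero[OF Z(1)])
    fix x :: real assume "x > 0"
    then show "(\<Sum>z\<in>Z. poly (rep_coeff r z - rep_coeff r' z) (of_real (x^2)) * xi z x) = 0"
      using assms(3)
      by (simp add: eval0_eq_sum_rep_coeff[OF Z(1,2)] eval0_eq_sum_rep_coeff[OF Z(1,3)]
          left_diff_distrib sum_subtractf)
  qed
  then show ?thesis
    by (auto intro!: ext sum.cong simp: eval0_eq_sum_rep_coeff[OF Z(1)] rep_coeff_rep_map[OF assms(1,2)] Z)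
qed

definition shat_poly :: "complex \<Rightarrow> complex poly \<Rightarrow> complex poly" where
  "shat_poly z \<rho> = smult (\<i> / 2) (tmap (\<lambda>k. Lk k z) \<rho>)"

lemma shat_poly_add: "shat_poly z (p + q) = shat_poly z p + shat_poly z q"
  by (simp add: shat_poly_def tmap_add smult_add_right)

lemma shat_poly_smult: "shat_poly z (smult c p) = smult c (shat_poly z p)"
  by (simp add: shat_poly_def tmap_smult mult.commute)

lemma Seval0_eq_eval0: "Seval0 r = eval0 (rep_map shat_poly r)"
  by (rule ext, induct r) (auto simp: Seval0_def shat_poly_def rhoL_eq_poly_tmap algebra_simps)

lemma Seval1_eq_eval1: "Seval1 r = eval1 (rep_map shat_poly r)"
  by (rule ext, induct r) (auto simp: Seval1_def eval1_def shat_poly_def rhoL_eq_poly_tmap algebra_simps)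

lemma Shat_eval0:
  assumes "valid_rep r"
  shows "Shat (eval0 r) = eval0 (rep_map shat_poly r)"
  unfolding Shat_def
proof (rule the_equality)
  show "\<exists>r'. valid_rep r' \<and> eval0 r = eval0 r' \<and> eval0 (rep_map shat_poly r) = Seval0 r'"
    using assms by (auto simp: Seval0_eq_eval0)
next
  fix g assume "\<exists>r'. valid_rep r' \<and> eval0 r = eval0 r' \<and> g = Seval0 r'"
  then obtain r' where r': "eval0 r = eval0 r'" "g = eval0 (rep_map shat_poly r')"
    by (auto simp: Seval0_eq_eval0)
  have "eval0 (rep_map shat_poly r') = eval0 (rep_map shat_poly r)"
    using r'(1) by (intro eval0_rep_map_cong[where K = shat_poly, OF shat_poly_add shat_poly_smult]) simp
  then show "g = eval0 (rep_map shat_poly r)"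
    by (simp add: r'(2))
qed

lemma Shat_star_eval1:
  assumes "valid_rep r"
  shows "Shat_star (eval1 r) = eval1 (rep_map shat_poly r)"
  unfolding Shat_star_def
proof (rule the_equality)
  show "\<exists>r'. valid_rep r' \<and> eval1 r = eval1 r' \<and> eval1 (rep_map shat_poly r) = Seval1 r'"
    using assms by (auto simp: Seval1_eq_eval1)
next
  fix g assume "\<exists>r'. valid_rep r' \<and> eval1 r = eval1 r' \<and> g = Seval1 r'"
  then obtain r' where r': "eval1 r = eval1 r'" "g = eval1 (rep_map shat_poly r')"
    by (auto simp: Seval1_eq_eval1)
  have "eval0 r' x = eval0 r x" if "x > 0" for x :: real
    using fun_cong[OF r'(1), of x] that by (simp add: eval1_eq_eval0)
  then have "eval0 (rep_map shat_poly r') = eval0 (rep_map shat_poly r)"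
    by (rule eval0_rep_map_cong[where K = shat_poly, OF shat_poly_add shat_poly_smult])
  then show "g = eval1 (rep_map shat_poly r)"
    by (simp add: r'(2) eval1_eq_eval0[abs_def])
qed

lemma osc_shat_poly_commutator:
  assumes "adm z"
  shows "osc \<alpha> z (shat_poly z \<rho>) - shat_poly z (osc \<alpha> z \<rho>) = smult (- \<i>) \<rho>"
  using osc_tmap_commutator[OF Lk_recurrence[OF assms], of \<alpha> \<rho>]
  by (simp add: shat_poly_def osc_smult flip: smult_diff_right)

lemma eval0_rep_map_commutator:
  assumes "\<And>c \<rho> z. (c, \<rho>, z) \<in> set r \<Longrightarrow> F z (G z \<rho>) - G z (F z \<rho>) = smult a \<rho>"
  shows "eval0 (rep_map F (rep_map G r)) x - eval0 (rep_map G (rep_map F r)) x = a * eval0 r x"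
  using assms
proof (induct r)
  case (Cons b r)
  obtain c \<rho> z where b: "b = (c, \<rho>, z)" by (cases b)
  have "eval0 (rep_map F (rep_map G r)) x - eval0 (rep_map G (rep_map F r)) x = a * eval0 r x"
    using Cons.prems by (intro Cons.hyps) auto
  moreover have "poly (F z (G z \<rho>)) s = poly (G z (F z \<rho>)) s + a * poly \<rho> s" for s
    using arg_cong[OF Cons.prems[of c \<rho> z], of "\<lambda>p. poly p s"] by (simp add: b algebra_simps)
  ultimately show ?case by (simp add: b algebra_simps)
qed simp

lemma eval1_rep_map_commutator:
  assumes "\<And>c \<rho> z. (c, \<rho>, z) \<in> set r \<Longrightarrow> F z (G z \<rho>) - G z (F z \<rho>) = smult a \<rho>"
  shows "eval1 (rep_map F (rep_map G r)) x - eval1 (rep_map G (rep_map F r)) x = a * eval1 r x"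
  using eval0_rep_map_commutator[where F = F and G = G and r = r and x = x, OF assms]
  by (simp add: eval1_eq_eval0 algebra_simps flip: right_diff_distrib)

theorem lemma4p6:
  shows "(\<forall>f \<in> N0. (\<lambda>x. hop (Shat f) x - Shat (hop f) x) = (\<lambda>x. - \<i> * f x))
       \<and> (\<forall>f \<in> N1. (\<lambda>x. hop (Shat_star f) x - Shat_star (hop f) x) = (\<lambda>x. - \<i> * f x))"
proof (intro conjI ballI ext)
  fix f x assume "f \<in> N0"
  then obtain r where r: "valid_rep r" "f = eval0 r" unfolding N0_def by blast
  then have "(c, \<rho>, z) \<in> set r \<Longrightarrow> osc 1 z (shat_poly z \<rho>) - shat_poly z (osc 1 z \<rho>) = smult (- \<i>) \<rho>"
    for c \<rho> z by (auto simp: valid_rep_def osc_shat_poly_commutator)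
  from eval0_rep_map_commutator[where F = "osc 1" and G = shat_poly, OF this]
  show "hop (Shat f) x - Shat (hop f) x = - \<i> * f x"
    using r by (simp add: Shat_eval0 hop_eval0)
next
  fix f x assume "f \<in> N1"
  then obtain r where r: "valid_rep r" "f = eval1 r" unfolding N1_def by blast
  then have "(c, \<rho>, z) \<in> set r \<Longrightarrow> osc 3 z (shat_poly z \<rho>) - shat_poly z (osc 3 z \<rho>) = smult (- \<i>) \<rho>"
    for c \<rho> z by (auto simp: valid_rep_def osc_shat_poly_commutator)
  from eval1_rep_map_commutator[where F = "osc 3" and G = shat_poly, OF this]
  show "hop (Shat_star f) x - Shat_star (hop f) x = - \<i> * f x"
    using r by (simp add: Shat_star_eval1 hop_eval1)
qed

end
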